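(* Let $P$ be a linear process and suppose $P\to^* Q$. Then: (1) $\mathcal{N}(Q)\subseteq\mathcal{N}(P)$; (2) for every $a \in \mathcal{N}(P)\setminus\mathcal{N}(Q)$ there exist processes $P_a, P'_a$ such that $P\to^* P_a\to P'_a\to^* Q$, $a\notin \mathcal{N}(P'_a)$, $\mathcal{N}(P'_a)\cup\{a\}=\mathcal{N}(P_a)$, and $\mathrm{sync}(a,P_a)$.
   Context: Processes: $P ::= \mathbf{0} \mid \alpha.P \mid P\,|\,Q$ where $\alpha$ is a name $a$ or a co-name $\bar a$ (with $\bar{\bar a}=a$). Structural congruence $\equiv$ is the smallest congruence with $P|\mathbf{0}\equiv P$, $P|Q\equiv Q|P$, $P|(Q|R)\equiv(P|Q)|R$. Reduction $\to$ is the smallest relation with $a.P\,|\,\bar a.Q\to P\,|\,Q$, closed under parallel contexts and under $\equiv$; $\to^*$ is its reflexive–transitive closure. A process is linear if each name occurs at most once as an input $a$ and at most once as an output $\bar a$. $\mathcal{N}(P)$ is the set of names occurring in $P$: $\mathcal{N}(\mathbf{0})=\emptyset$, $\mathcal{N}(a.P)=\mathcal{N}(\bar a.P)=\{a\}\cup\mathcal{N}(P)$, $\mathcal{N}(P|Q)=\mathcal{N}(P)\cup\mathcal{N}(Q)$. $\mathrm{sync}(a,P)$ holds iff there exist $P_1,\dots,P_4$ with $P\equiv P_1\,|\,a.P_2$ and $P\equiv P_3\,|\,\bar a.P_4$. *)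

theory Defs
  imports Main
begin

datatype 'n act = In 'n | Out 'n

fun co :: "'n act \<Rightarrow> 'n act" where
  "co (In a) = Out a"
| "co (Out a) = In a"

fun nm :: "'n act \<Rightarrow> 'n" where
  "nm (In a) = a"
| "nm (Out a) = a"

datatype 'n proc = Nil | Pre "'n act" "'n proc" | Par "'n proc" "'n proc"

inductive scong :: "'n proc \<Rightarrow> 'n proc \<Rightarrow> bool" where
  par_nil: "scong (Par P Nil) P"
| par_comm: "scong (Par P Q) (Par Q P)"
| par_assoc: "scong (Par P (Par Q R)) (Par (Par P Q) R)"
| refl: "scong P P"
| sym: "scong P Q \<Longrightarrow> scong Q P"
| trans: "scong P Q \<Longrightarrow> scong Q R \<Longrightarrow> scong P R"
| cong_pre: "scong P Q \<Longrightarrow> scong (Pre \<alpha> P) (Pre \<alpha> Q)"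
| cong_par: "scong P P' \<Longrightarrow> scong Q Q' \<Longrightarrow> scong (Par P Q) (Par P' Q')"

inductive red :: "'n proc \<Rightarrow> 'n proc \<Rightarrow> bool" where
  comm: "red (Par (Pre (In a) P) (Pre (Out a) Q)) (Par P Q)"
| par: "red P P' \<Longrightarrow> red (Par P Q) (Par P' Q)"
| struct: "scong P P' \<Longrightarrow> red P' Q' \<Longrightarrow> scong Q' Q \<Longrightarrow> red P Q"

abbreviation reds :: "'n proc \<Rightarrow> 'n proc \<Rightarrow> bool" where
  "reds \<equiv> red\<^sup>*\<^sup>*"

fun occ :: "'n act \<Rightarrow> 'n proc \<Rightarrow> nat" where
  "occ \<alpha> Nil = 0"
| "occ \<alpha> (Pre \<beta> P) = (if \<beta> = \<alpha> then 1 else 0) + occ \<alpha> P"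
| "occ \<alpha> (Par P Q) = occ \<alpha> P + occ \<alpha> Q"

definition linear :: "'n proc \<Rightarrow> bool" where
  "linear P \<longleftrightarrow> (\<forall>a. occ (In a) P \<le> 1 \<and> occ (Out a) P \<le> 1)"

fun names :: "'n proc \<Rightarrow> 'n set" where
  "names Nil = {}"
| "names (Pre \<alpha> P) = insert (nm \<alpha>) (names P)"
| "names (Par P Q) = names P \<union> names Q"

definition sync :: "'n \<Rightarrow> 'n proc \<Rightarrow> bool" where
  "sync a P \<longleftrightarrow> (\<exists>P1 P2 P3 P4. scong P (Par P1 (Pre (In a) P2)) \<and> scong P (Par P3 (Pre (Out a) P4)))"

end

theory Submission
  imports Defs
begin

text \<open>Every reduction step is one communication on some name \<open>a\<close>; it erases the two prefixes
  on \<open>a\<close> and no name other than \<open>a\<close>, so names only shrink along \<open>\<rightarrow>\<^sup>*\<close>. A name \<open>a\<close> of \<open>P\<close>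
  that is missing from \<open>Q\<close> therefore disappears at some step \<open>P\<^sub>a \<rightarrow> P\<^sub>a'\<close> of the computation,
  and that step must be the communication on \<open>a\<close>, whence \<open>sync a P\<^sub>a\<close>.\<close>

declare scong.trans [trans]

lemma scong_names: "scong P Q \<Longrightarrow> names P = names Q"
  by (induction rule: scong.induct) auto

lemma sync_scong: "scong P P' \<Longrightarrow> sync a P' \<Longrightarrow> sync a P"
  unfolding sync_def using scong.trans by blast

lemma scong_Par_regroup:
  assumes "scong P (Par X Y)"
  shows "scong (Par P Q) (Par (Par Q X) Y)"
proof -
  have "scong (Par P Q) (Par (Par X Y) Q)"
    using assms scong.cong_par scong.refl by blast
  also have "scong \<dots> (Par Q (Par X Y))" by (rule scong.par_comm)
  also have "scong \<dots> (Par (Par Q X) Y)" by (rule scong.par_assoc)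
  finally show ?thesis .
qed

lemma sync_Par_left: "sync a P \<Longrightarrow> sync a (Par P Q)"
  unfolding sync_def using scong_Par_regroup by blast

lemma sync_comm: "sync a (Par (Pre (In a) P) (Pre (Out a) Q))"
  unfolding sync_def using scong.par_comm scong.refl by blast

lemma red_sync_names: "red P P' \<Longrightarrow> \<exists>a. sync a P \<and> names P = insert a (names P')"
proof (induction rule: red.induct)
  case (comm a P Q)
  show ?case using sync_comm[of a P Q] by auto
next
  case (par P P' Q)
  then obtain a where "sync a P" and "names P = insert a (names P')" by blast
  then show ?case using sync_Par_left[of a P Q] by auto
next
  case (struct P P' Q' Q)
  then obtain a where "sync a P'" and "names P' = insert a (names Q')" by blast
  then show ?case
    using sync_scong[OF struct.hyps(1)] scong_names[OF struct.hyps(1)] scong_names[OF struct.hyps(3)]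
    by auto
qed

lemma red_names_subset: "red P Q \<Longrightarrow> names Q \<subseteq> names P"
  using red_sync_names by blast

lemma reds_names_subset: "reds P Q \<Longrightarrow> names Q \<subseteq> names P"
  by (induction rule: rtranclp_induct) (use red_names_subset in blast)+

lemma reds_name_lost_at_sync:
  assumes "reds P Q" and "a \<in> names P - names Q"
  shows "\<exists>Pa Pa'. reds P Pa \<and> red Pa Pa' \<and> reds Pa' Q \<and>
           a \<notin> names Pa' \<and> names Pa' \<union> {a} = names Pa \<and> sync a Pa"
  using assms
proof (induction rule: rtranclp_induct)
  case base
  then show ?case by simp
next
  case (step Q R)
  obtain b where sync: "sync b Q" and names_Q: "names Q = insert b (names R)"
    using red_sync_names[OF step.hyps(2)] by blast
  show ?case
  proof (cases "a \<in> names Q")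
    case True
    with names_Q step.prems have "a = b" by auto
    with step.hyps sync names_Q step.prems show ?thesis
      by (intro exI[of _ Q] exI[of _ R]) auto
  next
    case False
    with step.IH step.prems obtain Pa Pa' where "reds P Pa" "red Pa Pa'" "reds Pa' Q"
      "a \<notin> names Pa'" "names Pa' \<union> {a} = names Pa" "sync a Pa"
      by blast
    moreover have "reds Pa' R" using \<open>reds Pa' Q\<close> step.hyps(2) by simp
    ultimately show ?thesis by blast
  qed
qed

theorem corollary1:
  fixes P Q :: "'n proc"
  assumes "linear P" and "reds P Q"
  shows "names Q \<subseteq> names P \<and>
         (\<forall>a \<in> names P - names Q. \<exists>Pa Pa'.
            reds P Pa \<and> red Pa Pa' \<and> reds Pa' Q \<and>
            a \<notin> names Pa' \<and> names Pa' \<union> {a} = names Pa \<and> sync a Pa)"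
  using reds_names_subset[OF assms(2)] reds_name_lost_at_sync[OF assms(2)] by simp

end
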